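(* Let $A$ be a finite alphabet. A language $L\subseteq A^*$ is definable by a sentence of $FO^2[<,\mathrm{Inv}]$ if and only if it is definable by a sentence of $FO^2[<,\mathrm{Th}]$. That is, as language classes, $FO^2[<,\mathrm{Inv}]=FO^2[<,\mathrm{Th}]$.
   Context: Words $w\in A^*$ are finite structures whose universe is the set of positions $\{1,\dots,|w|\}$; $w(i)$ denotes the $i$-th letter. For each $a\in A$ there is a unary predicate $a(x)$, true iff the letter at position $x$ is $a$, and the order $<$ on positions. A sentence $\phi$ defines the language $\{w\in A^*: w\models\phi\}$; formulas may be interpreted in the empty word, where every existentially quantified sentence is false and every universally quantified one is true. For $a\in A$, the binary "between" predicate $a(x,y)$ means $\exists z\,(x<z\wedge z<y\wedge a(z))$, i.e. the letter $a$ occurs strictly between positions $x$ and $y$. $FO^2[<,\mathrm{Inv}]$ is the set of first-order formulas built from $<$, the unary predicates $a(x)$ and the binary predicates $a(x,y)$ ($a\in A$) using only two variables (which may be reused). For $a\in A$ and $k\ge 0$, the predicate $(a,k)(x,y)$ means that $x<y$ and there are at least $k$ positions $z$ with $x<z<y$ and $w(z)=a$. $FO^2[<,\mathrm{Th}]$ is the two-variable logic built from $<$, the unary predicates $a(x)$, and all predicates $(a,k)(x,y)$ ($a\in A$, $k\ge 0$). *)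

theory Defs
  imports Main
begin

text \<open>Words are lists; positions are 0-based indices 0..<length w (a shift of the
paper's 1-based positions, which changes nothing). The two variables of FO2.\<close>

datatype var = X | Y

datatype 'a fo2_inv =
    ILess var var
  | ILetter 'a var
  | IBetween 'a var var
  | INeg "'a fo2_inv"
  | IAnd "'a fo2_inv" "'a fo2_inv"
  | IEx var "'a fo2_inv"

datatype 'a fo2_th =
    TLess var var
  | TLetter 'a var
  | TThr 'a nat var var
  | TNeg "'a fo2_th"
  | TAnd "'a fo2_th" "'a fo2_th"
  | TEx var "'a fo2_th"

fun fv_inv :: "'a fo2_inv \<Rightarrow> var set" where
  "fv_inv (ILess x y) = {x, y}"
| "fv_inv (ILetter a x) = {x}"
| "fv_inv (IBetween a x y) = {x, y}"
| "fv_inv (INeg f) = fv_inv f"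
| "fv_inv (IAnd f g) = fv_inv f \<union> fv_inv g"
| "fv_inv (IEx x f) = fv_inv f - {x}"

fun fv_th :: "'a fo2_th \<Rightarrow> var set" where
  "fv_th (TLess x y) = {x, y}"
| "fv_th (TLetter a x) = {x}"
| "fv_th (TThr a k x y) = {x, y}"
| "fv_th (TNeg f) = fv_th f"
| "fv_th (TAnd f g) = fv_th f \<union> fv_th g"
| "fv_th (TEx x f) = fv_th f - {x}"

fun sat_inv :: "'a list \<Rightarrow> (var \<Rightarrow> nat) \<Rightarrow> 'a fo2_inv \<Rightarrow> bool" where
  "sat_inv w v (ILess x y) = (v x < v y)"
| "sat_inv w v (ILetter a x) = (w ! v x = a)"
| "sat_inv w v (IBetween a x y) = (\<exists>z. v x < z \<and> z < v y \<and> w ! z = a)"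
| "sat_inv w v (INeg f) = (\<not> sat_inv w v f)"
| "sat_inv w v (IAnd f g) = (sat_inv w v f \<and> sat_inv w v g)"
| "sat_inv w v (IEx x f) = (\<exists>i < length w. sat_inv w (v(x := i)) f)"

fun sat_th :: "'a list \<Rightarrow> (var \<Rightarrow> nat) \<Rightarrow> 'a fo2_th \<Rightarrow> bool" where
  "sat_th w v (TLess x y) = (v x < v y)"
| "sat_th w v (TLetter a x) = (w ! v x = a)"
| "sat_th w v (TThr a k x y) =
     (v x < v y \<and> k \<le> card {z. v x < z \<and> z < v y \<and> w ! z = a})"
| "sat_th w v (TNeg f) = (\<not> sat_th w v f)"
| "sat_th w v (TAnd f g) = (sat_th w v f \<and> sat_th w v g)"
| "sat_th w v (TEx x f) = (\<exists>i < length w. sat_th w (v(x := i)) f)"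

text \<open>Languages defined by sentences (closed formulas; truth does not depend on
the assignment, we use the constant-0 one).\<close>
definition lang_inv :: "'a fo2_inv \<Rightarrow> 'a list set" where
  "lang_inv f = {w. sat_inv w (\<lambda>_. 0) f}"

definition lang_th :: "'a fo2_th \<Rightarrow> 'a list set" where
  "lang_th f = {w. sat_th w (\<lambda>_. 0) f}"

definition FO2_Inv_definable :: "'a list set \<Rightarrow> bool" where
  "FO2_Inv_definable L \<longleftrightarrow> (\<exists>f. fv_inv f = {} \<and> L = lang_inv f)"

definition FO2_Th_definable :: "'a list set \<Rightarrow> bool" where
  "FO2_Th_definable L \<longleftrightarrow> (\<exists>f. fv_th f = {} \<and> L = lang_th f)"

end

theory Submission
  imports Defs
begin

text \<open>
  Since a(x,y) is (a,1)(x,y), FO2[<,Inv] embeds into FO2[<,Th]. Conversely, by induction on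
  FO2[<,Th] formulas, every formula in the variables x, y is a boolean combination of
  FO2[<,Inv]-definable properties of x, of y, and of the K-profile of (x, y): the order of x and y
  and, for every letter, the number of its occurrences strictly between them, capped at K.
  Quantifying away one variable thus reduces to defining "some y with a prescribed profile
  relative to x satisfies a definable property Q" with x free. This is done by induction on the
  total prescribed count: from x, hop to the nearest position (towards y) whose letter still has to
  be counted or must not occur. The hop itself only needs the between predicates, the variable
  just left being reused for the next hop.
\<close>

section \<open>Between predicates as thresholds\<close>

lemma sat_th_Thr_one_iff_Between:
  "sat_th w v (TThr a 1 x y) \<longleftrightarrow> sat_inv w v (IBetween a x y)"
proof -
  have "finite {z. v x < z \<and> z < v y \<and> w ! z = a}"
    by (rule finite_subset[of _ "{..<v y}"]) auto
  then have "1 \<le> card {z. v x < z \<and> z < v y \<and> w ! z = a} \<longleftrightarrow> (\<exists>z. v x < z \<and> z < v y \<and> w ! z = a)"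
    by (simp add: Suc_le_eq card_gt_0_iff) blast
  then show ?thesis by auto
qed

fun th_of_inv :: "'a fo2_inv \<Rightarrow> 'a fo2_th" where
  "th_of_inv (ILess x y) = TLess x y"
| "th_of_inv (ILetter a x) = TLetter a x"
| "th_of_inv (IBetween a x y) = TThr a 1 x y"
| "th_of_inv (INeg f) = TNeg (th_of_inv f)"
| "th_of_inv (IAnd f g) = TAnd (th_of_inv f) (th_of_inv g)"
| "th_of_inv (IEx x f) = TEx x (th_of_inv f)"

lemma fv_th_of_inv [simp]: "fv_th (th_of_inv f) = fv_inv f"
  by (induction f) auto

lemma sat_th_of_inv [simp]: "sat_th w v (th_of_inv f) \<longleftrightarrow> sat_inv w v f"
proof (induction f arbitrary: v)
  case (IBetween a x y)
  show ?case by (simp only: th_of_inv.simps sat_th_Thr_one_iff_Between)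
qed simp_all

lemma FO2_Th_definable_if_Inv_definable:
  assumes "FO2_Inv_definable L"
  shows "FO2_Th_definable L"
proof -
  obtain f where "fv_inv f = {}" "L = lang_inv f"
    using assms unfolding FO2_Inv_definable_def by blast
  then have "fv_th (th_of_inv f) = {}" "L = lang_th (th_of_inv f)"
    by (simp_all add: lang_inv_def lang_th_def)
  then show ?thesis
    unfolding FO2_Th_definable_def by blast
qed

section \<open>Unary FO2[<,Inv]-definable predicates\<close>

text \<open>Definability with every variable as the free one: the hops alternate between X and Y.\<close>

definition Inv_unary :: "('a list \<Rightarrow> nat \<Rightarrow> bool) \<Rightarrow> bool" where
  "Inv_unary P \<longleftrightarrow>
     (\<forall>x. \<exists>\<psi>. fv_inv \<psi> \<subseteq> {x} \<and> (\<forall>w v. v x < length w \<longrightarrow> sat_inv w v \<psi> = P w (v x)))"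

lemma Inv_unaryI:
  "(\<And>x. \<exists>\<psi>. fv_inv \<psi> \<subseteq> {x} \<and> (\<forall>w v. v x < length w \<longrightarrow> sat_inv w v \<psi> = P w (v x)))
    \<Longrightarrow> Inv_unary P"
  unfolding Inv_unary_def by blast

lemma Inv_unaryE:
  assumes "Inv_unary P"
  obtains \<psi> where "fv_inv \<psi> \<subseteq> {x}" "\<And>w v. v x < length w \<Longrightarrow> sat_inv w v \<psi> = P w (v x)"
  using assms unfolding Inv_unary_def by blast

lemma Inv_unary_cong:
  "Inv_unary P \<Longrightarrow> (\<And>w i. i < length w \<Longrightarrow> P w i = P' w i) \<Longrightarrow> Inv_unary P'"
  unfolding Inv_unary_def by metis

lemma Inv_unary_const: "Inv_unary (\<lambda>w i. c)"
proof (rule Inv_unaryI)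
  fix x
  show "\<exists>\<psi>. fv_inv \<psi> \<subseteq> {x} \<and> (\<forall>w v. v x < length w \<longrightarrow> sat_inv w v \<psi> = c)"
    by (rule exI[of _ "if c then INeg (ILess x x) else ILess x x"]) auto
qed

lemma Inv_unary_letter: "Inv_unary (\<lambda>w i. w ! i = a)"
  by (rule Inv_unaryI, rule_tac x = "ILetter a x" in exI) auto

lemma Inv_unary_not: "Inv_unary P \<Longrightarrow> Inv_unary (\<lambda>w i. \<not> P w i)"
proof (rule Inv_unaryI)
  fix x
  assume "Inv_unary P"
  then obtain \<psi> where "fv_inv \<psi> \<subseteq> {x}" "\<And>w v. v x < length w \<Longrightarrow> sat_inv w v \<psi> = P w (v x)"
    by (rule Inv_unaryE[where x = x]) blast
  then show "\<exists>\<psi>. fv_inv \<psi> \<subseteq> {x} \<and> (\<forall>w v. v x < length w \<longrightarrow> sat_inv w v \<psi> = (\<not> P w (v x)))"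
    by (intro exI[of _ "INeg \<psi>"]) auto
qed

lemma Inv_unary_conj: "Inv_unary P \<Longrightarrow> Inv_unary Q \<Longrightarrow> Inv_unary (\<lambda>w i. P w i \<and> Q w i)"
proof (rule Inv_unaryI)
  fix x
  assume "Inv_unary P" "Inv_unary Q"
  obtain \<psi> where "fv_inv \<psi> \<subseteq> {x}" "\<And>w v. v x < length w \<Longrightarrow> sat_inv w v \<psi> = P w (v x)"
    using \<open>Inv_unary P\<close> by (rule Inv_unaryE[where x = x]) blast
  moreover obtain \<chi> where "fv_inv \<chi> \<subseteq> {x}" "\<And>w v. v x < length w \<Longrightarrow> sat_inv w v \<chi> = Q w (v x)"
    using \<open>Inv_unary Q\<close> by (rule Inv_unaryE[where x = x]) blast
  ultimately show "\<exists>\<psi>. fv_inv \<psi> \<subseteq> {x} \<and>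
      (\<forall>w v. v x < length w \<longrightarrow> sat_inv w v \<psi> = (P w (v x) \<and> Q w (v x)))"
    by (intro exI[of _ "IAnd \<psi> \<chi>"]) auto
qed

lemma Inv_unary_disj: "Inv_unary P \<Longrightarrow> Inv_unary Q \<Longrightarrow> Inv_unary (\<lambda>w i. P w i \<or> Q w i)"
  using Inv_unary_not[OF Inv_unary_conj[OF Inv_unary_not Inv_unary_not]] by simp

lemma Inv_unary_bex:
  "finite S \<Longrightarrow> (\<And>s. s \<in> S \<Longrightarrow> Inv_unary (P s)) \<Longrightarrow> Inv_unary (\<lambda>w i. \<exists>s\<in>S. P s w i)"
proof (induction S rule: finite_induct)
  case empty
  then show ?case by (simp add: Inv_unary_const)
next
  case (insert s S)
  then have "Inv_unary (\<lambda>w i. P s w i \<or> (\<exists>s\<in>S. P s w i))"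
    by (intro Inv_unary_disj) auto
  then show ?case by simp
qed

lemma Inv_unary_boolean_combination:
  "\<forall>P\<in>set Ps. Inv_unary P \<Longrightarrow> Inv_unary (\<lambda>w i. g (map (\<lambda>P. P w i) Ps))"
proof (induction Ps arbitrary: g)
  case Nil
  then show ?case by (simp add: Inv_unary_const)
next
  case (Cons P Ps)
  have "Inv_unary (\<lambda>w i. P w i \<and> g (True # map (\<lambda>P. P w i) Ps) \<or>
                         \<not> P w i \<and> g (False # map (\<lambda>P. P w i) Ps))"
    using Cons by (intro Inv_unary_disj Inv_unary_conj Inv_unary_not) auto
  then show ?case
  proof (rule Inv_unary_cong)
    fix w i
    show "(P w i \<and> g (True # map (\<lambda>P. P w i) Ps) \<or> \<not> P w i \<and> g (False # map (\<lambda>P. P w i) Ps))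
        = g (map (\<lambda>P. P w i) (P # Ps))"
      by (cases "P w i") simp_all
  qed
qed

definition positions_between :: "nat \<Rightarrow> nat \<Rightarrow> nat set" where
  "positions_between i j = {min i j<..<max i j}"

definition count_between :: "'a list \<Rightarrow> 'a \<Rightarrow> nat \<Rightarrow> nat \<Rightarrow> nat" where
  "count_between w a i j = card {z \<in> positions_between i j. w ! z = a}"

definition avoids :: "'a list \<Rightarrow> 'a set \<Rightarrow> nat \<Rightarrow> nat \<Rightarrow> bool" where
  "avoids w S i j \<longleftrightarrow> (\<forall>z\<in>positions_between i j. w ! z \<notin> S)"

definition dir_less :: "bool \<Rightarrow> nat \<Rightarrow> nat \<Rightarrow> bool" where
  "dir_less d i j \<longleftrightarrow> (if d then i < j else j < i)"

lemma positions_between_less_max: "z \<in> positions_between i j \<Longrightarrow> z < max i j"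
  by (simp add: positions_between_def)

lemma count_between_eq_0_iff:
  "count_between w a i j = 0 \<longleftrightarrow> (\<forall>z\<in>positions_between i j. w ! z \<noteq> a)"
  by (auto simp: count_between_def positions_between_def)

lemma count_between_split:
  assumes "z \<in> positions_between i j"
  shows "count_between w a i j =
    count_between w a i z + (if w ! z = a then 1 else 0) + count_between w a z j"
proof -
  let ?occ = "\<lambda>A. {y \<in> A. w ! y = a}"
  have "positions_between i j = positions_between i z \<union> {z} \<union> positions_between z j"
    using assms by (auto simp: positions_between_def)
  then have "?occ (positions_between i j) =
      ?occ (positions_between i z) \<union> ?occ {z} \<union> ?occ (positions_between z j)"
    by blast
  moreover have "?occ (positions_between i z) \<inter> ?occ {z} = {}"
    "(?occ (positions_between i z) \<union> ?occ {z}) \<inter> ?occ (positions_between z j) = {}"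
    using assms by (auto simp: positions_between_def)
  moreover have "card (?occ {z}) = (if w ! z = a then 1 else 0)"
    by (simp add: Collect_conv_if)
  ultimately show ?thesis
    unfolding count_between_def by (simp add: card_Un_disjoint positions_between_def)
qed

lemma count_between_self [simp]: "count_between w a i i = 0"
  by (simp add: count_between_def positions_between_def)

lemma dir_less_between_iff:
  "dir_less d i j \<and> z \<in> positions_between i j \<longleftrightarrow> dir_less d i z \<and> dir_less d z j"
  by (auto simp: dir_less_def positions_between_def)

lemma positions_between_subset_if_not_beyond:
  "dir_less d i j \<Longrightarrow> dir_less d i z \<Longrightarrow> \<not> dir_less d z j \<Longrightarrow>
    positions_between i j \<subseteq> positions_between i z"
  by (auto simp: dir_less_def positions_between_def split: if_splits)

lemma closest_position_between:
  assumes "z\<^sub>0 \<in> positions_between i j" "P z\<^sub>0"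
  obtains z where "z \<in> positions_between i j" "P z" "\<forall>y\<in>positions_between i z. \<not> P y"
proof -
  obtain z where z: "z \<in> positions_between i j \<and> P z"
    and least: "\<And>y. y \<in> positions_between i j \<and> P y \<Longrightarrow> (z - i) + (i - z) \<le> (y - i) + (i - y)"
    using ex_has_least_nat[of "\<lambda>z. z \<in> positions_between i j \<and> P z" z\<^sub>0 "\<lambda>z. (z - i) + (i - z)"] assms
    by blast
  have "\<not> P y" if y: "y \<in> positions_between i z" for y
  proof
    assume "P y"
    moreover have "y \<in> positions_between i j"
      using y z by (auto simp: positions_between_def)
    ultimately have "(z - i) + (i - z) \<le> (y - i) + (i - y)"
      using least by blast
    moreover have "(y - i) + (i - y) < (z - i) + (i - z)"
      using y by (simp add: positions_between_def min_def max_def split: if_splits; arith)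
    ultimately show False
      by simp
  qed
  with z that show ?thesis by blast
qed

section \<open>Walking towards a position with prescribed counts\<close>

fun other :: "var \<Rightarrow> var" where
  "other X = Y"
| "other Y = X"

lemma other_neq [simp]: "other x \<noteq> x" "x \<noteq> other x"
  by (cases x; simp)+

fun avoid_letters :: "'a list \<Rightarrow> var \<Rightarrow> var \<Rightarrow> 'a fo2_inv" where
  "avoid_letters [] x y = INeg (ILess x x)"
| "avoid_letters (a # as) x y =
     IAnd (IAnd (INeg (IBetween a x y)) (INeg (IBetween a y x))) (avoid_letters as x y)"

lemma fv_avoid_letters: "fv_inv (avoid_letters as x y) \<subseteq> {x, y}"
  by (induction as) auto

lemma sat_avoid_letters: "sat_inv w v (avoid_letters as x y) \<longleftrightarrow> avoids w (set as) (v x) (v y)"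
  by (induction as) (auto simp: avoids_def positions_between_def min_def max_def)

lemma Inv_unary_ex_avoiding:
  assumes "Inv_unary Q" "finite S"
  shows "Inv_unary (\<lambda>w i. \<exists>j<length w. dir_less d i j \<and> avoids w S i j \<and> Q w j)"
proof (rule Inv_unaryI)
  fix x
  let ?y = "other x"
  obtain \<chi> where \<chi>: "fv_inv \<chi> \<subseteq> {?y}" "\<And>w v. v ?y < length w \<Longrightarrow> sat_inv w v \<chi> = Q w (v ?y)"
    using \<open>Inv_unary Q\<close> by (rule Inv_unaryE[where x = ?y]) blast
  obtain as where as: "set as = S"
    using finite_list[OF \<open>finite S\<close>] by blast
  let ?\<psi> = "IEx ?y (IAnd (if d then ILess x ?y else ILess ?y x) (IAnd (avoid_letters as x ?y) \<chi>))"
  have "fv_inv ?\<psi> \<subseteq> {x}"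
    using \<chi>(1) fv_avoid_letters[of as x ?y] by auto
  moreover have "sat_inv w v ?\<psi> \<longleftrightarrow>
      (\<exists>j<length w. dir_less d (v x) j \<and> avoids w S (v x) j \<and> Q w j)" for w v
    using \<chi>(2) as by (auto simp: sat_avoid_letters dir_less_def)
  ultimately show "\<exists>\<psi>. fv_inv \<psi> \<subseteq> {x} \<and> (\<forall>w v. v x < length w \<longrightarrow>
      sat_inv w v \<psi> = (\<exists>j<length w. dir_less d (v x) j \<and> avoids w S (v x) j \<and> Q w j))"
    by blast
qed

text \<open>
  The letter counts between i and j are bounded below by r and equal to r on E. A capped
  profile says exactly this, with E the letters whose count is below the cap.
\<close>

definition dir_counts :: "bool \<Rightarrow> ('a \<Rightarrow> nat) \<Rightarrow> 'a set \<Rightarrow> 'a list \<Rightarrow> nat \<Rightarrow> nat \<Rightarrow> bool" where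
  "dir_counts d r E w i j \<longleftrightarrow> dir_less d i j \<and>
     (\<forall>a. r a \<le> count_between w a i j) \<and> (\<forall>a\<in>E. count_between w a i j = r a)"

lemma dir_counts_zero_iff:
  "dir_counts d (\<lambda>_. 0) E w i j \<longleftrightarrow> dir_less d i j \<and> avoids w E i j"
  by (auto simp: dir_counts_def avoids_def count_between_eq_0_iff)

lemma count_between_past_avoided:
  assumes iz: "dir_less d i z" and zj: "dir_less d z j" and avoid: "avoids w S i z" and "a \<in> S"
  shows "count_between w a i j = (if w ! z = a then 1 else 0) + count_between w a z j"
proof -
  have "z \<in> positions_between i j"
    using iz zj dir_less_between_iff by blast
  moreover have "count_between w a i z = 0"
    using avoid \<open>a \<in> S\<close> by (auto simp: avoids_def count_between_eq_0_iff)
  ultimately show ?thesis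
    using count_between_split[of z i j w a] by simp
qed

lemma dir_less_past_avoided:
  assumes ij: "dir_less d i j" and iz: "dir_less d i z" and avoid: "avoids w S i z"
    and "a \<in> S" "count_between w a i j \<noteq> 0"
  shows "dir_less d z j"
proof (rule ccontr)
  assume "\<not> dir_less d z j"
  with ij iz have "positions_between i j \<subseteq> positions_between i z"
    by (rule positions_between_subset_if_not_beyond)
  with avoid \<open>a \<in> S\<close> \<open>count_between w a i j \<noteq> 0\<close> show False
    by (auto simp: count_between_eq_0_iff avoids_def)
qed

lemma dir_counts_step:
  assumes iz: "dir_less d i z" and avoid: "avoids w ({a. 0 < r a} \<union> E) i z"
    and b: "w ! z = b" "0 < r b"
  shows "dir_counts d r E w i j \<longleftrightarrow> dir_counts d (r(b := r b - 1)) E w z j"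
proof -
  let ?S = "{a. 0 < r a} \<union> E"
  let ?r' = "r(b := r b - 1)"
  have "dir_less d z j" if "dir_counts d r E w i j"
  proof (rule dir_less_past_avoided[OF _ iz avoid])
    show "dir_less d i j" "b \<in> ?S"
      using that b(2) by (simp_all add: dir_counts_def)
    show "count_between w b i j \<noteq> 0"
      using that b(2) unfolding dir_counts_def by (metis not_le)
  qed
  moreover have "dir_counts d r E w i j \<longleftrightarrow> dir_counts d ?r' E w z j" if zj: "dir_less d z j"
  proof -
    have count: "count_between w a i j = (if a = b then 1 else 0) + count_between w a z j"
      if "a \<in> ?S" for a
      using count_between_past_avoided[OF iz zj avoid that] b(1) by simp
    have "r a \<le> count_between w a i j \<longleftrightarrow> ?r' a \<le> count_between w a z j" for a
      using count[of a] b(2) by (cases "a \<in> ?S") auto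
    moreover have "count_between w a i j = r a \<longleftrightarrow> count_between w a z j = ?r' a" if "a \<in> E" for a
      using count[of a] that b(2) by auto
    moreover have "dir_less d i j"
      using iz zj dir_less_between_iff by blast
    ultimately show ?thesis
      using zj unfolding dir_counts_def by blast
  qed
  moreover have "dir_counts d ?r' E w z j \<Longrightarrow> dir_less d z j"
    by (simp add: dir_counts_def)
  ultimately show ?thesis
    by blast
qed

lemma dir_counts_nearest_counted_letter:
  assumes ij: "dir_counts d r E w i j" and "0 < r a"
  obtains z where "z \<in> positions_between i j" "dir_less d i z"
    "avoids w ({c. 0 < r c} \<union> E) i z" "0 < r (w ! z)"
proof -
  let ?S = "{c. 0 < r c} \<union> E"
  have "count_between w a i j \<noteq> 0"
    using ij \<open>0 < r a\<close> unfolding dir_counts_def by (metis not_le)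
  then obtain y where "y \<in> positions_between i j" "w ! y \<in> ?S"
    using \<open>0 < r a\<close> by (auto simp: count_between_eq_0_iff)
  then obtain z where z: "z \<in> positions_between i j" "w ! z \<in> ?S" and avoid: "avoids w ?S i z"
    by (rule closest_position_between) (auto simp: avoids_def)
  have "dir_less d i z"
    using ij z(1) dir_less_between_iff unfolding dir_counts_def by blast
  moreover have "0 < r (w ! z)"
  proof (rule ccontr)
    assume "\<not> 0 < r (w ! z)"
    then have "count_between w (w ! z) i j = 0"
      using z(2) ij by (auto simp: dir_counts_def)
    with z(1) show False
      by (auto simp: count_between_eq_0_iff)
  qed
  ultimately show ?thesis
    using that z(1) avoid by blast
qed

lemma dir_counts_first_step:
  fixes r :: "'a \<Rightarrow> nat" and E :: "'a set"
  assumes "i < length w"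
  defines "S \<equiv> {a. 0 < r a} \<union> E"
  shows "(\<exists>j<length w. dir_counts d r E w i j \<and> Q w j) \<longleftrightarrow>
    (r = (\<lambda>_. 0) \<and> (\<exists>j<length w. dir_less d i j \<and> avoids w S i j \<and> Q w j)) \<or>
    (\<exists>b. 0 < r b \<and> (\<exists>z<length w. dir_less d i z \<and> avoids w S i z \<and>
        w ! z = b \<and> (\<exists>j<length w. dir_counts d (r(b := r b - 1)) E w z j \<and> Q w j)))"
    (is "?L \<longleftrightarrow> ?R\<^sub>1 \<or> ?R\<^sub>2")
proof
  assume ?L
  then obtain j where j: "j < length w" "dir_counts d r E w i j" "Q w j"
    by blast
  show "?R\<^sub>1 \<or> ?R\<^sub>2"
  proof (cases "r = (\<lambda>_. 0)")
    case True
    then show ?thesis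
      using j dir_counts_zero_iff[of d E w i j] by (auto simp: S_def)
  next
    case False
    then obtain a where "0 < r a"
      by auto
    with j(2) obtain z where z: "z \<in> positions_between i j" "dir_less d i z"
      "avoids w S i z" "0 < r (w ! z)"
      unfolding S_def by (rule dir_counts_nearest_counted_letter)
    have "z < length w"
      using positions_between_less_max[OF z(1)] assms(1) j(1) by simp
    moreover have "dir_counts d (r(w ! z := r (w ! z) - 1)) E w z j"
      using dir_counts_step[OF z(2) z(3)[unfolded S_def] refl z(4)] j(2) by blast
    ultimately show ?thesis
      using z j by blast
  qed
next
  assume "?R\<^sub>1 \<or> ?R\<^sub>2"
  then show ?L
  proof
    assume ?R\<^sub>1
    then show ?L
      by (auto simp: S_def dir_counts_zero_iff)
  next
    assume ?R\<^sub>2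
    then obtain b z j where "0 < r b" "dir_less d i z" "avoids w S i z" "w ! z = b"
      and j: "j < length w" "dir_counts d (r(b := r b - 1)) E w z j" "Q w j"
      by blast
    then have "dir_counts d r E w i j"
      using dir_counts_step[of d i z w r E b j] unfolding S_def by blast
    with j show ?L
      by blast
  qed
qed

lemma Inv_unary_ex_dir_counts:
  fixes r :: "'a::finite \<Rightarrow> nat"
  assumes "Inv_unary Q"
  shows "Inv_unary (\<lambda>w i. \<exists>j<length w. dir_counts d r E w i j \<and> Q w j)"
proof (induction "sum r UNIV" arbitrary: r rule: less_induct)
  case less
  define S where "S = {a. 0 < r a} \<union> E"
  have after_letter: "Inv_unary (\<lambda>w z. w ! z = b \<and>
      (\<exists>j<length w. dir_counts d (r(b := r b - 1)) E w z j \<and> Q w j))"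
    if "0 < r b" for b
  proof -
    have "sum (r(b := r b - 1)) UNIV < sum r UNIV"
      using that by (simp add: sum.remove[of UNIV b])
    then have "Inv_unary (\<lambda>w z. \<exists>j<length w. dir_counts d (r(b := r b - 1)) E w z j \<and> Q w j)"
      by (rule less)
    then show ?thesis
      by (rule Inv_unary_conj[OF Inv_unary_letter])
  qed
  have no_step: "Inv_unary (\<lambda>w i. r = (\<lambda>_. 0) \<and>
      (\<exists>j<length w. dir_less d i j \<and> avoids w S i j \<and> Q w j))"
    using assms by (intro Inv_unary_conj Inv_unary_const Inv_unary_ex_avoiding) simp_all
  have first_step: "Inv_unary (\<lambda>w i. \<exists>b\<in>{b. 0 < r b}. \<exists>z<length w.
      dir_less d i z \<and> avoids w S i z \<and>
      (w ! z = b \<and> (\<exists>j<length w. dir_counts d (r(b := r b - 1)) E w z j \<and> Q w j)))"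
    using after_letter by (intro Inv_unary_bex Inv_unary_ex_avoiding) (simp_all add: S_def)
  have "Inv_unary (\<lambda>w i.
      (r = (\<lambda>_. 0) \<and> (\<exists>j<length w. dir_less d i j \<and> avoids w S i j \<and> Q w j)) \<or>
      (\<exists>b\<in>{b. 0 < r b}. \<exists>z<length w. dir_less d i z \<and> avoids w S i z \<and>
        (w ! z = b \<and> (\<exists>j<length w. dir_counts d (r(b := r b - 1)) E w z j \<and> Q w j))))"
    using no_step first_step by (rule Inv_unary_disj)
  then show ?case
    by (rule Inv_unary_cong) (simp add: dir_counts_first_step S_def)
qed

section \<open>Profiles\<close>

definition profile :: "nat \<Rightarrow> 'a list \<Rightarrow> nat \<Rightarrow> nat \<Rightarrow> bool \<times> bool \<times> ('a \<Rightarrow> nat)" where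
  "profile K w i j = (i < j, j < i, \<lambda>a. min K (count_between w a i j))"

lemma Inv_unary_ex_profile:
  fixes Q :: "('a::finite) list \<Rightarrow> nat \<Rightarrow> bool"
  assumes "Inv_unary Q"
  shows "Inv_unary (\<lambda>w i. \<exists>j<length w. profile K w i j = p \<and> Q w j)"
proof -
  obtain l g c where p: "p = (l, g, c)"
    by (cases p)
  consider "l = g" | "l \<noteq> g" "\<forall>a. c a \<le> K" | "\<exists>a. K < c a"
    by (metis not_le)
  then show ?thesis
  proof cases
    case 1
    have "profile K w i j = p \<longleftrightarrow> \<not> l \<and> j = i \<and> c = (\<lambda>_. 0)" for w i j
      using 1 by (auto simp: p profile_def fun_eq_iff)
    moreover have "Inv_unary (\<lambda>w i. \<not> l \<and> c = (\<lambda>_. 0) \<and> Q w i)"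
      using assms by (intro Inv_unary_conj Inv_unary_const)
    ultimately show ?thesis
      by (rule_tac Inv_unary_cong) auto
  next
    case 2
    have "profile K w i j = p \<longleftrightarrow> dir_counts l c {a. c a < K} w i j" for w i j
      using 2 unfolding profile_def dir_counts_def dir_less_def p
      by (auto simp: fun_eq_iff) (metis min.absorb_iff2 min_def nat_less_le not_le)+
    then show ?thesis
      using Inv_unary_ex_dir_counts[OF assms] by simp
  next
    case 3
    then obtain a where "K < c a"
      by blast
    moreover have "snd (snd (profile K w i j)) a \<le> K" for w i j
      by (simp add: profile_def)
    ultimately have "profile K w i j \<noteq> p" for w i j
      unfolding p by (metis not_le snd_conv)
    then show ?thesis
      using Inv_unary_const[of False] by simp
  qed
qed

definition profile_reducible :: "('a list \<Rightarrow> nat \<Rightarrow> nat \<Rightarrow> bool) \<Rightarrow> bool" where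
  "profile_reducible R \<longleftrightarrow> (\<exists>K Ps Qs F. (\<forall>P\<in>set Ps. Inv_unary P) \<and> (\<forall>Q\<in>set Qs. Inv_unary Q) \<and>
     (\<forall>w i j. i < length w \<longrightarrow> j < length w \<longrightarrow>
        R w i j = F (map (\<lambda>P. P w i) Ps) (map (\<lambda>Q. Q w j) Qs) (profile K w i j)))"

lemma profile_reducibleI:
  assumes "\<forall>P\<in>set Ps. Inv_unary P" "\<forall>Q\<in>set Qs. Inv_unary Q"
    and "\<And>w i j. i < length w \<Longrightarrow> j < length w \<Longrightarrow>
      R w i j = F (map (\<lambda>P. P w i) Ps) (map (\<lambda>Q. Q w j) Qs) (profile K w i j)"
  shows "profile_reducible R"
  unfolding profile_reducible_def
  by (rule exI[of _ K], rule exI[of _ Ps], rule exI[of _ Qs], rule exI[of _ F]) (use assms in auto)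

lemma profile_reducibleE:
  assumes "profile_reducible R"
  obtains K Ps Qs F where "\<forall>P\<in>set Ps. Inv_unary P" "\<forall>Q\<in>set Qs. Inv_unary Q"
    "\<And>w i j. i < length w \<Longrightarrow> j < length w \<Longrightarrow>
      R w i j = F (map (\<lambda>P. P w i) Ps) (map (\<lambda>Q. Q w j) Qs) (profile K w i j)"
  using assms unfolding profile_reducible_def by blast

definition capped_profiles :: "nat \<Rightarrow> (bool \<times> bool \<times> ('a \<Rightarrow> nat)) set" where
  "capped_profiles K = UNIV \<times> UNIV \<times> {c. \<forall>a. c a \<le> K}"

lemma finite_capped_profiles: "finite (capped_profiles K :: (bool \<times> bool \<times> ('a::finite \<Rightarrow> nat)) set)"
proof -
  have "finite {c :: 'a \<Rightarrow> nat. \<forall>a. c a \<le> K}"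
    using finite_set_of_finite_funs[of "UNIV :: 'a set" "{..K}" 0] by simp
  then show ?thesis
    unfolding capped_profiles_def by (intro finite_cartesian_product) simp_all
qed

lemma profile_in_capped_profiles: "profile K w i j \<in> capped_profiles K"
  by (simp add: profile_def capped_profiles_def)

lemma Inv_unary_ex_if_profile_reducible:
  fixes R :: "('a::finite) list \<Rightarrow> nat \<Rightarrow> nat \<Rightarrow> bool"
  assumes "profile_reducible R"
  shows "Inv_unary (\<lambda>w i. \<exists>j<length w. R w i j)"
proof -
  obtain K Ps Qs F where Ps: "\<forall>P\<in>set Ps. Inv_unary P" and Qs: "\<forall>Q\<in>set Qs. Inv_unary Q"
    and R: "\<And>w i j. i < length w \<Longrightarrow> j < length w \<Longrightarrow>
      R w i j = F (map (\<lambda>P. P w i) Ps) (map (\<lambda>Q. Q w j) Qs) (profile K w i j)"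
    using assms by (rule profile_reducibleE) blast
  define C where "C = {cs :: bool list. set cs \<subseteq> UNIV \<and> length cs = length Qs}"
  have "finite C"
    unfolding C_def by (rule finite_lists_length_eq) simp
  then have "Inv_unary (\<lambda>w i. \<exists>cs\<in>C. \<exists>p\<in>capped_profiles K. F (map (\<lambda>P. P w i) Ps) cs p \<and>
      (\<exists>j<length w. profile K w i j = p \<and> map (\<lambda>Q. Q w j) Qs = cs))"
    using Ps Qs
    by (intro Inv_unary_bex finite_capped_profiles Inv_unary_conj Inv_unary_ex_profile
        Inv_unary_boolean_combination)
  then show ?thesis
  proof (rule Inv_unary_cong)
    fix w :: "'a list" and i
    assume "i < length w"
    have "map (\<lambda>Q. Q w j) Qs \<in> C" "profile K w i j \<in> capped_profiles K" for j
      by (simp_all add: C_def profile_in_capped_profiles)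
    then show "(\<exists>cs\<in>C. \<exists>p\<in>capped_profiles K. F (map (\<lambda>P. P w i) Ps) cs p \<and>
        (\<exists>j<length w. profile K w i j = p \<and> map (\<lambda>Q. Q w j) Qs = cs)) \<longleftrightarrow>
      (\<exists>j<length w. R w i j)"
      using R[OF \<open>i < length w\<close>] by blast
  qed
qed

lemma profile_reducible_profile:
  "(\<And>w i j. i < length w \<Longrightarrow> j < length w \<Longrightarrow> R w i j = f (profile K w i j)) \<Longrightarrow>
    profile_reducible R"
  by (rule profile_reducibleI[where Ps = "[]" and Qs = "[]" and F = "\<lambda>_ _. f"]) simp_all

lemma profile_reducible_left: "Inv_unary P \<Longrightarrow> profile_reducible (\<lambda>w i j. P w i)"
  by (rule profile_reducibleI[where Ps = "[P]" and Qs = "[]" and F = "\<lambda>bs _ _. hd bs"]) simp_all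

lemma profile_reducible_right: "Inv_unary Q \<Longrightarrow> profile_reducible (\<lambda>w i j. Q w j)"
  by (rule profile_reducibleI[where Ps = "[]" and Qs = "[Q]" and F = "\<lambda>_ cs _. hd cs"]) simp_all

lemma profile_reducible_not: "profile_reducible R \<Longrightarrow> profile_reducible (\<lambda>w i j. \<not> R w i j)"
  by (elim profile_reducibleE, rule profile_reducibleI[where F = "\<lambda>bs cs p. \<not> _ bs cs p"]) simp_all

definition cap_profile :: "nat \<Rightarrow> bool \<times> bool \<times> ('a \<Rightarrow> nat) \<Rightarrow> bool \<times> bool \<times> ('a \<Rightarrow> nat)" where
  "cap_profile K = (\<lambda>(l, g, c). (l, g, \<lambda>a. min K (c a)))"

lemma cap_profile_profile: "K \<le> K' \<Longrightarrow> cap_profile K (profile K' w i j) = profile K w i j"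
  by (auto simp: cap_profile_def profile_def min_def fun_eq_iff)

lemma profile_reducible_conj:
  assumes "profile_reducible R\<^sub>1" "profile_reducible R\<^sub>2"
  shows "profile_reducible (\<lambda>w i j. R\<^sub>1 w i j \<and> R\<^sub>2 w i j)"
proof -
  obtain K\<^sub>1 Ps\<^sub>1 Qs\<^sub>1 F\<^sub>1 where 1: "\<forall>P\<in>set Ps\<^sub>1. Inv_unary P" "\<forall>Q\<in>set Qs\<^sub>1. Inv_unary Q"
    "\<And>w i j. i < length w \<Longrightarrow> j < length w \<Longrightarrow>
      R\<^sub>1 w i j = F\<^sub>1 (map (\<lambda>P. P w i) Ps\<^sub>1) (map (\<lambda>Q. Q w j) Qs\<^sub>1) (profile K\<^sub>1 w i j)"
    using assms(1) by (rule profile_reducibleE) blast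
  obtain K\<^sub>2 Ps\<^sub>2 Qs\<^sub>2 F\<^sub>2 where 2: "\<forall>P\<in>set Ps\<^sub>2. Inv_unary P" "\<forall>Q\<in>set Qs\<^sub>2. Inv_unary Q"
    "\<And>w i j. i < length w \<Longrightarrow> j < length w \<Longrightarrow>
      R\<^sub>2 w i j = F\<^sub>2 (map (\<lambda>P. P w i) Ps\<^sub>2) (map (\<lambda>Q. Q w j) Qs\<^sub>2) (profile K\<^sub>2 w i j)"
    using assms(2) by (rule profile_reducibleE) blast
  let ?K = "max K\<^sub>1 K\<^sub>2"
  show ?thesis
  proof (rule profile_reducibleI[where Ps = "Ps\<^sub>1 @ Ps\<^sub>2" and Qs = "Qs\<^sub>1 @ Qs\<^sub>2" and K = ?K])
    fix w :: "'a list" and i j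
    assume "i < length w" "j < length w"
    then show "(R\<^sub>1 w i j \<and> R\<^sub>2 w i j) =
      (\<lambda>bs cs p. F\<^sub>1 (take (length Ps\<^sub>1) bs) (take (length Qs\<^sub>1) cs) (cap_profile K\<^sub>1 p) \<and>
                 F\<^sub>2 (drop (length Ps\<^sub>1) bs) (drop (length Qs\<^sub>1) cs) (cap_profile K\<^sub>2 p))
        (map (\<lambda>P. P w i) (Ps\<^sub>1 @ Ps\<^sub>2)) (map (\<lambda>Q. Q w j) (Qs\<^sub>1 @ Qs\<^sub>2)) (profile ?K w i j)"
      using 1(3) 2(3) by (simp add: cap_profile_profile)
  qed (use 1 2 in auto)
qed

definition swap_profile :: "bool \<times> bool \<times> ('a \<Rightarrow> nat) \<Rightarrow> bool \<times> bool \<times> ('a \<Rightarrow> nat)" where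
  "swap_profile = (\<lambda>(l, g, c). (g, l, c))"

lemma swap_profile_profile: "swap_profile (profile K w i j) = profile K w j i"
  by (simp add: swap_profile_def profile_def count_between_def positions_between_def
      min.commute max.commute)

lemma profile_reducible_converse:
  "profile_reducible R \<Longrightarrow> profile_reducible (\<lambda>w i j. R w j i)"
  by (elim profile_reducibleE,
      rule profile_reducibleI[where F = "\<lambda>bs cs p. _ cs bs (swap_profile p)"])
    (simp_all add: swap_profile_profile)

lemma profile_reducible_diagonal:
  assumes "profile_reducible R"
  shows "Inv_unary (\<lambda>w i. R w i i)"
proof -
  obtain K Ps Qs F where Ps: "\<forall>P\<in>set Ps. Inv_unary P" and Qs: "\<forall>Q\<in>set Qs. Inv_unary Q"
    and R: "\<And>w i j. i < length w \<Longrightarrow> j < length w \<Longrightarrow>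
      R w i j = F (map (\<lambda>P. P w i) Ps) (map (\<lambda>Q. Q w j) Qs) (profile K w i j)"
    using assms by (rule profile_reducibleE) blast
  have "Inv_unary (\<lambda>w i. (\<lambda>bs. F (take (length Ps) bs) (drop (length Ps) bs) (False, False, \<lambda>_. 0))
      (map (\<lambda>P. P w i) (Ps @ Qs)))"
    using Ps Qs by (intro Inv_unary_boolean_combination) auto
  then show ?thesis
    by (rule Inv_unary_cong) (simp add: R profile_def)
qed

section \<open>From FO2[<,Th] to FO2[<,Inv]\<close>

definition assign :: "nat \<Rightarrow> nat \<Rightarrow> var \<Rightarrow> nat" where
  "assign i j = (\<lambda>x. case x of X \<Rightarrow> i | Y \<Rightarrow> j)"

lemma assign_simps [simp]:
  "assign i j X = i" "assign i j Y = j"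
  "(assign i j)(X := k) = assign k j" "(assign i j)(Y := k) = assign i k"
  by (auto simp: assign_def fun_eq_iff split: var.splits)

lemma assign_zero: "assign 0 0 = (\<lambda>_. 0)"
  by (auto simp: assign_def fun_eq_iff split: var.splits)

lemma profile_reducible_sat_th:
  "profile_reducible (\<lambda>w i j. sat_th w (assign i j) (f :: ('a::finite) fo2_th))"
proof (induction f)
  case (TLess x y)
  show ?case
    by (rule profile_reducible_profile[where K = 0 and
          f = "\<lambda>(l, g, c). x = X \<and> y = Y \<and> l \<or> x = Y \<and> y = X \<and> g"])
      (cases x; cases y; simp add: profile_def)
next
  case (TLetter a x)
  show ?case
    by (cases x) (simp_all add: profile_reducible_left profile_reducible_right Inv_unary_letter)
next
  case (TThr a k x y)
  show ?case
    by (rule profile_reducible_profile[where K = k and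
          f = "\<lambda>(l, g, c). (x = X \<and> y = Y \<and> l \<or> x = Y \<and> y = X \<and> g) \<and> k \<le> c a"])
      (cases x; cases y; auto simp: profile_def count_between_def positions_between_def)
next
  case (TNeg f)
  then show ?case
    by (simp add: profile_reducible_not)
next
  case (TAnd f g)
  then show ?case
    by (simp add: profile_reducible_conj)
next
  case (TEx x f)
  show ?case
  proof (cases x)
    case X
    have "Inv_unary (\<lambda>w j. \<exists>i<length w. sat_th w (assign i j) f)"
      using Inv_unary_ex_if_profile_reducible[OF profile_reducible_converse[OF TEx.IH]] .
    then show ?thesis
      using X by (simp add: profile_reducible_right)
  next
    case Y
    have "Inv_unary (\<lambda>w i. \<exists>j<length w. sat_th w (assign i j) f)"
      using Inv_unary_ex_if_profile_reducible[OF TEx.IH] .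
    then show ?thesis
      using Y by (simp add: profile_reducible_left)
  qed
qed

lemma FO2_Inv_definable_first_position:
  assumes "Inv_unary P"
  shows "FO2_Inv_definable {w. if w = [] then b else P w 0}"
proof -
  obtain \<psi> where \<psi>: "fv_inv \<psi> \<subseteq> {X}" "\<And>w v. v X < length w \<Longrightarrow> sat_inv w v \<psi> = P w (v X)"
    using assms by (rule Inv_unaryE[where x = X]) blast
  define first :: "'a fo2_inv" where "first = IEx X (IAnd (INeg (IEx Y (ILess Y X))) \<psi>)"
  define nonempty :: "'a fo2_inv" where "nonempty = IEx X (INeg (ILess X X))"
  define \<sigma> where "\<sigma> = (if b then INeg (IAnd (INeg first) nonempty) else first)"
  have "sat_inv w (v(X := i)) \<psi> = P w i" if "i < length w" for w v i
    using \<psi>(2)[of "v(X := i)" w] that by simp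
  then have "sat_inv w v first \<longleftrightarrow> (\<exists>i<length w. \<not> (\<exists>j<length w. j < i) \<and> P w i)" for w v
    by (auto simp: first_def)
  also have "(\<exists>i<length w. \<not> (\<exists>j<length w. j < i) \<and> P w i) \<longleftrightarrow> w \<noteq> [] \<and> P w 0" for w
    by (metis gr_zeroI length_greater_0_conv order.strict_trans)
  moreover have "sat_inv w v nonempty \<longleftrightarrow> w \<noteq> []" for w v
    by (auto simp: nonempty_def)
  ultimately have "lang_inv \<sigma> = {w. if w = [] then b else P w 0}"
    by (auto simp: lang_inv_def \<sigma>_def)
  moreover have "fv_inv \<sigma> = {}"
    using \<psi>(1) by (auto simp: \<sigma>_def first_def nonempty_def)
  ultimately show ?thesis
    unfolding FO2_Inv_definable_def by blast
qed

lemma FO2_Inv_definable_if_Th_definable: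
  fixes L :: "('a::finite) list set"
  assumes "FO2_Th_definable L"
  shows "FO2_Inv_definable L"
proof -
  obtain f :: "'a fo2_th" where "L = lang_th f"
    using assms unfolding FO2_Th_definable_def by blast
  then have "L = {w. if w = [] then sat_th [] (\<lambda>_. 0) f else sat_th w (assign 0 0) f}"
    by (auto simp: lang_th_def assign_zero)
  moreover have "Inv_unary (\<lambda>w i. sat_th w (assign i i) f)"
    by (rule profile_reducible_diagonal[OF profile_reducible_sat_th])
  ultimately show ?thesis
    using FO2_Inv_definable_first_position[of "\<lambda>w i. sat_th w (assign i i) f" "sat_th [] (\<lambda>_. 0) f"]
    by simp
qed

theorem theorem1:
  fixes L :: "('a::finite) list set"
  shows "FO2_Inv_definable L \<longleftrightarrow> FO2_Th_definable L"
  using FO2_Th_definable_if_Inv_definable FO2_Inv_definable_if_Th_definable by blast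

end
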